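(* Let $0<\gamma<1$ and let $\Pi$ be a deterministic communication protocol on $\{0,1\}^n\times\{0,1\}^n$ of depth $d$. Then there exists a $\gamma$-subcube-like protocol $\tilde\Pi$ (whose protocol tree need not be binary and may be undefined on some inputs) of depth at most $d$ and codimension $\mathrm{codim}(\tilde\Pi)\le \frac{7}{1-\gamma}\, d$ such that \[ \Pr_{(\bm x,\bm y)\sim\{0,1\}^n\times\{0,1\}^n}\big[\Pi(\bm x,\bm y)\ne\tilde\Pi(\bm x,\bm y)\big]\le e^{-d}, \] where inputs on which $\tilde\Pi$ is undefined count as disagreements.
   Context: A (generalized) protocol is a rooted tree in which each node $v$ is associated with a rectangle $R_v=X_v\times Y_v\subseteq\{0,1\}^n\times\{0,1\}^n$, the root with a subset of the full input space, and at each internal node one player partitions her/his side: the children's rectangles are of the form $X'\times Y_v$ (Alice speaks) or $X_v\times Y'$ (Bob speaks) and are disjoint; leaves are labelled with outputs, and $\tilde\Pi(x,y)$ is the label of the leaf containing $(x,y)$. Min-entropy: $\mathbf H_\infty(\bm x)=\min_x\log(1/\Pr[\bm x=x])$. A random $\bm x\in\{0,1\}^n$ is $\gamma$-spread if $\mathbf H_\infty(\bm x_I)\ge\gamma|I|$ for every $I\subseteq[n]$. It is $(I,\gamma)$-structured if $\bm x_I$ is constant (fixed to some $a_I$) with probability 1 and $\bm x_{[n]\setminus I}$ is $\gamma$-spread. A rectangle $X\times Y$ is $\gamma$-subcube-like w.r.t. $(I,J)$ if $\bm x\sim X$ (uniform) is $(I,\gamma)$-structured and $\bm y\sim Y$ is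 $(J,\gamma)$-structured; write $\mathrm{fix}(X)=I$, $\mathrm{fix}(Y)=J$ and $\mathrm{codim}(X\times Y)=|I|+|J|$. A protocol is $\gamma$-subcube-like if every node rectangle is $\gamma$-subcube-like; its codimension is the maximum codimension of its node rectangles. *)

theory Defs
  imports Complex_Main
begin

text \<open>Bit strings in {0,1}^n are boolean lists of length n; coordinates are 0..<n.\<close>

definition cube :: "nat \<Rightarrow> bool list set" where
  "cube n = {x. length x = n}"

datatype 'o proto =
    Leaf 'o
  | ANode "bool list \<Rightarrow> bool" "'o proto" "'o proto"   \<comment> \<open>Alice speaks a bit depending on x\<close>
  | BNode "bool list \<Rightarrow> bool" "'o proto" "'o proto"   \<comment> \<open>Bob speaks a bit depending on y\<close>

fun depth :: "'o proto \<Rightarrow> nat" where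
  "depth (Leaf _) = 0"
| "depth (ANode _ l r) = Suc (max (depth l) (depth r))"
| "depth (BNode _ l r) = Suc (max (depth l) (depth r))"

fun eval :: "'o proto \<Rightarrow> bool list \<Rightarrow> bool list \<Rightarrow> 'o" where
  "eval (Leaf v) x y = v"
| "eval (ANode f l r) x y = (if f x then eval l x y else eval r x y)"
| "eval (BNode g l r) x y = (if g y then eval l x y else eval r x y)"

text \<open>A node stores its rectangle X_v \<times> Y_v; leaves additionally store their label;
  internal nodes have an arbitrary (finite) list of children.\<close>

datatype 'o gproto =
    GLeaf "bool list set" "bool list set" 'o
  | GNode "bool list set" "bool list set" "'o gproto list"

fun rectX :: "'o gproto \<Rightarrow> bool list set" where
  "rectX (GLeaf X _ _) = X" | "rectX (GNode X _ _) = X"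

fun rectY :: "'o gproto \<Rightarrow> bool list set" where
  "rectY (GLeaf _ Y _) = Y" | "rectY (GNode _ Y _) = Y"

definition alice_split :: "bool list set \<Rightarrow> bool list set \<Rightarrow> 'o gproto list \<Rightarrow> bool" where
  "alice_split X Y ts \<longleftrightarrow>
     (\<forall>t\<in>set ts. rectY t = Y \<and> rectX t \<subseteq> X) \<and>
     (\<forall>i<length ts. \<forall>j<length ts. i \<noteq> j \<longrightarrow> rectX (ts ! i) \<inter> rectX (ts ! j) = {})"

definition bob_split :: "bool list set \<Rightarrow> bool list set \<Rightarrow> 'o gproto list \<Rightarrow> bool" where
  "bob_split X Y ts \<longleftrightarrow>
     (\<forall>t\<in>set ts. rectX t = X \<and> rectY t \<subseteq> Y) \<and>
     (\<forall>i<length ts. \<forall>j<length ts. i \<noteq> j \<longrightarrow> rectY (ts ! i) \<inter> rectY (ts ! j) = {})"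

fun wf_nodes :: "'o gproto \<Rightarrow> bool" where
  "wf_nodes (GLeaf _ _ _) = True"
| "wf_nodes (GNode X Y ts) =
     ((alice_split X Y ts \<or> bob_split X Y ts) \<and> (\<forall>t\<in>set ts. wf_nodes t))"

definition wf_gproto :: "nat \<Rightarrow> 'o gproto \<Rightarrow> bool" where
  "wf_gproto n T \<longleftrightarrow> rectX T \<subseteq> cube n \<and> rectY T \<subseteq> cube n \<and> wf_nodes T"

fun gdepth :: "'o gproto \<Rightarrow> nat" where
  "gdepth (GLeaf _ _ _) = 0"
| "gdepth (GNode _ _ ts) = Suc (Max (insert 0 (set (map gdepth ts))))"

fun node_rects :: "'o gproto \<Rightarrow> (bool list set \<times> bool list set) set" where
  "node_rects (GLeaf X Y _) = {(X, Y)}"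
| "node_rects (GNode X Y ts) = insert (X, Y) (\<Union> (set (map node_rects ts)))"

fun leaves :: "'o gproto \<Rightarrow> (bool list set \<times> bool list set \<times> 'o) set" where
  "leaves (GLeaf X Y v) = {(X, Y, v)}"
| "leaves (GNode X Y ts) = \<Union> (set (map leaves ts))"

text \<open>Output of a generalized protocol: the label of the leaf containing (x,y),
  or None (undefined) if no leaf contains (x,y).\<close>

definition geval :: "'o gproto \<Rightarrow> bool list \<Rightarrow> bool list \<Rightarrow> 'o option" where
  "geval T x y =
    (if \<exists>(X, Y, v)\<in>leaves T. x \<in> X \<and> y \<in> Y
     then Some (snd (snd (SOME l. l \<in> leaves T \<and> x \<in> fst l \<and> y \<in> fst (snd l))))
     else None)"

definition prob_restr :: "bool list set \<Rightarrow> nat set \<Rightarrow> bool list \<Rightarrow> real" where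
  "prob_restr X I z = real (card {x\<in>X. \<forall>i\<in>I. x ! i = z ! i}) / real (card X)"

text \<open>H_\<infinity>(x_I) for x uniform on X: minimum over the values actually attained.\<close>
definition min_entropy :: "bool list set \<Rightarrow> nat set \<Rightarrow> real" where
  "min_entropy X I = Min ((\<lambda>z. log 2 (1 / prob_restr X I z)) ` X)"

definition spread_on :: "nat \<Rightarrow> real \<Rightarrow> bool list set \<Rightarrow> nat set \<Rightarrow> bool" where
  "spread_on n \<gamma> X S \<longleftrightarrow> (\<forall>I\<subseteq>S. min_entropy X I \<ge> \<gamma> * real (card I))"

definition structured :: "nat \<Rightarrow> nat set \<Rightarrow> real \<Rightarrow> bool list set \<Rightarrow> bool" where
  "structured n I \<gamma> X \<longleftrightarrow>
     X \<noteq> {} \<and> X \<subseteq> cube n \<and> I \<subseteq> {..<n} \<and>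
     (\<forall>x\<in>X. \<forall>x'\<in>X. \<forall>i\<in>I. x ! i = x' ! i) \<and>
     spread_on n \<gamma> X ({..<n} - I)"

definition subcube_like_wrt ::
  "nat \<Rightarrow> real \<Rightarrow> bool list set \<Rightarrow> bool list set \<Rightarrow> nat set \<Rightarrow> nat set \<Rightarrow> bool" where
  "subcube_like_wrt n \<gamma> X Y I J \<longleftrightarrow> structured n I \<gamma> X \<and> structured n J \<gamma> Y"

definition subcube_like_codim_le :: "nat \<Rightarrow> real \<Rightarrow> 'o gproto \<Rightarrow> real \<Rightarrow> bool" where
  "subcube_like_codim_le n \<gamma> T k \<longleftrightarrow>
     (\<forall>(X, Y)\<in>node_rects T. \<exists>I J. subcube_like_wrt n \<gamma> X Y I J \<and> real (card I + card J) \<le> k)"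

end

theory Submission
  imports Defs
begin

text \<open>The simulating protocol is built top-down along \<Pi>. At a node with rectangle X \<times> Y
  and fixed coordinates I, J, the message of the speaker (say Alice) splits X in two, and each
  half is cut greedily into a density-restoring partition: every piece fixes a maximal set K
  of further coordinates on which what remains of the half is still 2^(-\<gamma>|K|)-dense, and
  maximality makes the piece \<gamma>-spread outside I \<union> K. Fixing K multiplies the density of the
  piece inside its subcube by 2^((1-\<gamma>)|K|), relative to the share of X that remains. Hence a
  budget B \<le> \<rho>(X) \<rho>(Y) 2^((1-\<gamma>)(k - |I| - |J|)) can stay \<ge> 1 only while the codimension is at
  most k, and pieces whose budget would drop below 1 are left uncovered. Since the budget of a
  piece is proportional to the size of the remainder it is cut from, a square-root estimate
  bounds the uncovered part of X \<times> Y by |X| |Y| 3^depth / sqrt B. The root budget B = 128^d,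
  i.e. k = 7d/(1-\<gamma>), leaves an error of at most (3/sqrt 128)^d \<le> e^(-d). Bob's nodes reduce to
  Alice's by transposing the whole construction.\<close>

section \<open>Subcubes and spreadness\<close>

lemma cube_eq_lists: "cube n = {xs. set xs \<subseteq> (UNIV :: bool set) \<and> length xs = n}"
  by (auto simp: cube_def)

lemma finite_cube: "finite (cube n)"
  unfolding cube_eq_lists by (rule finite_lists_length_eq) simp

lemma card_cube: "card (cube n) = 2 ^ n"
  unfolding cube_eq_lists by (subst card_lists_length_eq) simp_all

definition fixed_on :: "bool list set \<Rightarrow> nat set \<Rightarrow> bool" where
  "fixed_on X I \<longleftrightarrow> (\<forall>x\<in>X. \<forall>x'\<in>X. \<forall>i\<in>I. x ! i = x' ! i)"

lemma fixed_on_subset: "fixed_on X I \<Longrightarrow> X' \<subseteq> X \<Longrightarrow> fixed_on X' I"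
  unfolding fixed_on_def by blast

lemma card_le_fixed_on:
  assumes "X \<subseteq> cube n" "I \<subseteq> {..<n}" "fixed_on X I"
  shows "card X \<le> 2 ^ (n - card I)"
proof -
  define ks where "ks = sorted_list_of_set ({..<n} - I)"
  have set_ks: "set ks = {..<n} - I" unfolding ks_def by simp
  have length_ks: "length ks = n - card I"
    unfolding ks_def using assms(2) by (simp add: card_Diff_subset finite_subset)
  define free_part where "free_part x = map (\<lambda>i. x ! i) ks" for x :: "bool list"
  have "inj_on free_part X"
  proof
    fix x x' assume x: "x \<in> X" "x' \<in> X" "free_part x = free_part x'"
    show "x = x'"
    proof (rule nth_equalityI)
      show "length x = length x'" using x assms(1) by (auto simp: cube_def)
      fix i assume "i < length x"
      then have "i < n" using x assms(1) by (auto simp: cube_def)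
      show "x ! i = x' ! i"
      proof (cases "i \<in> I")
        case True
        then show ?thesis using assms(3) x unfolding fixed_on_def by blast
      next
        case False
        then have "i \<in> set ks" using \<open>i < n\<close> set_ks by auto
        then show ?thesis using x(3) unfolding free_part_def by (auto simp: map_eq_conv)
      qed
    qed
  qed
  moreover have "free_part ` X \<subseteq> cube (n - card I)"
    by (auto simp: free_part_def length_ks cube_def)
  ultimately have "card X \<le> card (cube (n - card I))"
    using finite_cube by (metis card_image card_mono)
  then show ?thesis by (simp add: card_cube)
qed

definition agreeing :: "bool list set \<Rightarrow> nat set \<Rightarrow> bool list \<Rightarrow> bool list set" where
  "agreeing X I z = {x\<in>X. \<forall>i\<in>I. x ! i = z ! i}"

lemma agreeing_subset: "agreeing X I z \<subseteq> X"
  by (auto simp: agreeing_def)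

lemma self_in_agreeing: "z \<in> X \<Longrightarrow> z \<in> agreeing X I z"
  by (simp add: agreeing_def)

lemma agreeing_empty [simp]: "agreeing X {} z = X"
  by (simp add: agreeing_def)

lemma agreeing_Un: "agreeing X (K \<union> K') z = agreeing (agreeing X K z) K' z"
  by (auto simp: agreeing_def)

lemma agreeing_eq: "w \<in> agreeing X K z \<Longrightarrow> agreeing X K w = agreeing X K z"
  by (auto simp: agreeing_def)

lemma fixed_on_agreeing: "fixed_on X I \<Longrightarrow> fixed_on (agreeing X K z) (I \<union> K)"
  by (auto simp: fixed_on_def agreeing_def)

lemma spread_on_iff_card:
  assumes "finite X" "X \<noteq> {}"
  shows "spread_on n \<gamma> X S \<longleftrightarrow>
    (\<forall>I\<subseteq>S. \<forall>z\<in>X. real (card (agreeing X I z)) \<le> 2 powr (- \<gamma> * card I) * card X)"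
proof -
  have iff: "\<gamma> * card I \<le> log 2 (1 / prob_restr X I z) \<longleftrightarrow>
      real (card (agreeing X I z)) \<le> 2 powr (- \<gamma> * card I) * card X" if "z \<in> X" for I z
  proof -
    define c where "c = real (card (agreeing X I z))"
    have c: "c > 0"
      unfolding c_def using that assms(1) self_in_agreeing agreeing_subset
      by (metis card_gt_0_iff empty_iff finite_subset of_nat_0_less_iff)
    have "card X > 0" using assms by auto
    then have "1 / prob_restr X I z = card X / c"
      by (simp add: prob_restr_def agreeing_def c_def)
    then have "\<gamma> * card I \<le> log 2 (1 / prob_restr X I z) \<longleftrightarrow> 2 powr (\<gamma> * card I) \<le> card X / c"
      using c \<open>card X > 0\<close> by (simp add: le_log_iff)
    also have "\<dots> \<longleftrightarrow> c \<le> card X / 2 powr (\<gamma> * card I)"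
      using c by (simp add: pos_le_divide_eq pos_divide_le_eq mult.commute)
    also have "\<dots> \<longleftrightarrow> c \<le> 2 powr (- \<gamma> * card I) * card X"
      by (simp add: powr_minus divide_inverse mult.commute)
    finally show ?thesis unfolding c_def .
  qed
  have "finite ((\<lambda>z. log 2 (1 / prob_restr X I z)) ` X)" for I
    using assms(1) by simp
  then show ?thesis
    unfolding spread_on_def min_entropy_def using assms(2) iff by (simp add: Min_ge_iff)
qed

lemma structured_cube:
  assumes "\<gamma> \<le> 1"
  shows "structured n {} \<gamma> (cube n)"
proof -
  have ne: "cube n \<noteq> {}"
    using cube_def by (metis (mono_tags) length_replicate mem_Collect_eq empty_iff)
  have "real (card (agreeing (cube n) I z)) \<le> 2 powr (- \<gamma> * card I) * card (cube n)"
    if I: "I \<subseteq> {..<n}" for I z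
  proof -
    have "card I \<le> n" using card_mono[OF _ I] by simp
    have "card (agreeing (cube n) I z) \<le> 2 ^ (n - card I)"
      using I by (intro card_le_fixed_on) (auto simp: agreeing_def fixed_on_def)
    then have "real (card (agreeing (cube n) I z)) \<le> 2 powr real (n - card I)"
      by (simp add: powr_realpow)
    also have "\<dots> = 2 powr (- real (card I)) * 2 powr n"
      using \<open>card I \<le> n\<close> by (simp add: of_nat_diff powr_add[symmetric])
    also have "\<dots> \<le> 2 powr (- \<gamma> * card I) * 2 powr n"
      using assms by (intro mult_right_mono powr_mono) (auto intro: mult_right_mono[of \<gamma> 1, simplified])
    finally show ?thesis by (simp add: card_cube powr_realpow)
  qed
  then have "spread_on n \<gamma> (cube n) ({..<n} - {})"
    unfolding spread_on_iff_card[OF finite_cube ne] by simp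
  then show ?thesis unfolding structured_def using ne by auto
qed

lemma structuredD:
  assumes "structured n I \<gamma> X"
  shows "X \<noteq> {}" "X \<subseteq> cube n" "I \<subseteq> {..<n}" "fixed_on X I" "finite X" "finite I"
proof -
  show "X \<noteq> {}" "X \<subseteq> cube n" "I \<subseteq> {..<n}" "fixed_on X I"
    using assms unfolding structured_def fixed_on_def by blast+
  then show "finite X" "finite I"
    using finite_subset[OF _ finite_cube] finite_subset[OF _ finite_lessThan] by blast+
qed

lemma spread_on_agreeing_maximal:
  fixes \<gamma> :: real
  assumes "finite X" "finite S" "K \<subseteq> S" "z \<in> X"
    and dense: "real (card (agreeing X K z)) \<ge> 2 powr (- \<gamma> * card K) * card X"
    and maximal: "\<And>K' w. K' \<subseteq> S \<Longrightarrow> w \<in> X \<Longrightarrow>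
      real (card (agreeing X K' w)) \<ge> 2 powr (- \<gamma> * card K') * card X \<Longrightarrow> card K' \<le> card K"
  shows "spread_on n \<gamma> (agreeing X K z) (S - K)"
proof -
  define P where "P = agreeing X K z"
  have fin: "finite P" and ne: "P \<noteq> {}"
    using assms(1,4) agreeing_subset[of X K z] self_in_agreeing[of z X K]
    unfolding P_def by (auto intro: finite_subset)
  have "real (card (agreeing P K' w)) \<le> 2 powr (- \<gamma> * card K') * card P"
    if K': "K' \<subseteq> S - K" and w: "w \<in> P" for K' w
  proof (rule ccontr)
    assume "\<not> ?thesis"
    then have denser: "real (card (agreeing P K' w)) > 2 powr (- \<gamma> * card K') * card P" by simp
    have "finite K" "finite K'" using assms(2,3) K' by (auto intro: finite_subset)
    have card_Un: "card (K \<union> K') = card K + card K'"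
      using K' \<open>finite K\<close> \<open>finite K'\<close> by (intro card_Un_disjoint) auto
    have "2 powr (- \<gamma> * card (K \<union> K')) * card X
        = 2 powr (- \<gamma> * card K') * (2 powr (- \<gamma> * card K) * card X)"
      by (simp add: card_Un powr_add[symmetric] algebra_simps)
    also have "\<dots> \<le> 2 powr (- \<gamma> * card K') * card P"
      using dense unfolding P_def by simp
    also have "\<dots> < card (agreeing P K' w)"
      by (rule denser)
    also have "agreeing P K' w = agreeing X (K \<union> K') w"
      using w unfolding P_def agreeing_Un by (simp add: agreeing_eq)
    finally have "2 powr (- \<gamma> * card (K \<union> K')) * card X \<le> card (agreeing X (K \<union> K') w)"
      by (rule less_imp_le)
    moreover have "K \<union> K' \<subseteq> S" using K' assms(3) by blast
    moreover have "w \<in> X" using w agreeing_subset unfolding P_def by blast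
    ultimately have "card (K \<union> K') \<le> card K"
      using maximal by blast
    then have "K' = {}" using card_Un \<open>finite K'\<close> by simp
    then show False using denser by simp
  qed
  then show ?thesis unfolding P_def[symmetric] spread_on_iff_card[OF fin ne] by blast
qed

section \<open>Density-restoring partitions\<close>

text \<open>The density of each piece is measured relative to what is left of the set after
  removing the earlier pieces.\<close>

fun density_restoring_partition ::
  "nat \<Rightarrow> real \<Rightarrow> nat set \<Rightarrow> bool list set \<Rightarrow> (bool list set \<times> nat set) list \<Rightarrow> bool" where
  "density_restoring_partition n \<gamma> I X [] \<longleftrightarrow> X = {}"
| "density_restoring_partition n \<gamma> I X ((P, K) # L) \<longleftrightarrow>
     P \<subseteq> X \<and> K \<inter> I = {} \<and> structured n (I \<union> K) \<gamma> P \<and>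
     real (card P) \<ge> 2 powr (- \<gamma> * card K) * card X \<and>
     density_restoring_partition n \<gamma> I (X - P) L"

lemma density_restoring_partition_exists:
  "X \<subseteq> cube n \<Longrightarrow> I \<subseteq> {..<n} \<Longrightarrow> fixed_on X I \<Longrightarrow> \<exists>L. density_restoring_partition n \<gamma> I X L"
proof (induction "card X" arbitrary: X rule: less_induct)
  case less
  show ?case
  proof (cases "X = {}")
    case True
    then show ?thesis by (metis density_restoring_partition.simps(1))
  next
    case False
    then obtain z0 where "z0 \<in> X" by blast
    have "finite X" using less.prems(1) finite_cube finite_subset by blast
    define S where "S = {..<n} - I"
    define dense where "dense Kz \<longleftrightarrow> fst Kz \<subseteq> S \<and> snd Kz \<in> X \<and>
      real (card (agreeing X (fst Kz) (snd Kz))) \<ge> 2 powr (- \<gamma> * card (fst Kz)) * card X" for Kz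
    have "dense ({}, z0)" unfolding dense_def using \<open>z0 \<in> X\<close> by simp
    moreover have "card (fst Kz) < Suc n" if "dense Kz" for Kz
    proof -
      have "fst Kz \<subseteq> {..<n}" using that unfolding dense_def S_def by blast
      then show ?thesis using card_mono[of "{..<n}" "fst Kz"] by simp
    qed
    ultimately obtain Kz where "dense Kz" and max: "\<And>Kz'. dense Kz' \<Longrightarrow> card (fst Kz') \<le> card (fst Kz)"
      using ex_has_greatest_nat[of dense "({}, z0)" "card \<circ> fst" "Suc n"] by (metis comp_apply)
    obtain K z where Kz: "Kz = (K, z)" by fastforce
    have K: "K \<subseteq> S" "z \<in> X"
      and dense_K: "real (card (agreeing X K z)) \<ge> 2 powr (- \<gamma> * card K) * card X"
      using \<open>dense Kz\<close> unfolding dense_def Kz by auto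
    define P where "P = agreeing X K z"
    have "{..<n} - (I \<union> K) = S - K" unfolding S_def by blast
    have "spread_on n \<gamma> P ({..<n} - (I \<union> K))"
      unfolding P_def \<open>{..<n} - (I \<union> K) = S - K\<close>
    proof (rule spread_on_agreeing_maximal)
      show "finite S" unfolding S_def by simp
      fix K' w
      assume "K' \<subseteq> S" "w \<in> X" "real (card (agreeing X K' w)) \<ge> 2 powr (- \<gamma> * card K') * card X"
      then show "card K' \<le> card K" using max[of "(K', w)"] unfolding dense_def Kz by simp
    qed (use \<open>finite X\<close> K dense_K in auto)
    moreover have "z \<in> P" "P \<subseteq> X"
      unfolding P_def using K self_in_agreeing agreeing_subset by auto
    moreover have "fixed_on P (I \<union> K)"
      unfolding P_def using less.prems(3) by (rule fixed_on_agreeing)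
    moreover have "I \<union> K \<subseteq> {..<n}" using less.prems(2) K(1) unfolding S_def by blast
    ultimately have P: "structured n (I \<union> K) \<gamma> P"
      using less.prems(1) unfolding structured_def fixed_on_def by blast
    have "card (X - P) < card X"
      using \<open>finite X\<close> \<open>z \<in> P\<close> \<open>P \<subseteq> X\<close> by (intro psubset_card_mono) auto
    moreover have "fixed_on (X - P) I" using less.prems(3) by (rule fixed_on_subset) blast
    ultimately obtain L where "density_restoring_partition n \<gamma> I (X - P) L"
      using less.hyps[of "X - P"] less.prems(1,2) by blast
    moreover have "K \<inter> I = {}" using K(1) unfolding S_def by blast
    ultimately have "density_restoring_partition n \<gamma> I X ((P, K) # L)"
      using P \<open>P \<subseteq> X\<close> dense_K unfolding P_def by simp
    then show ?thesis by blast
  qed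
qed

section \<open>Density budget\<close>

definition density :: "nat \<Rightarrow> bool list set \<Rightarrow> nat set \<Rightarrow> real" where
  "density n X I = card X * 2 powr (real (card I) - n)"

lemma density_nonneg: "density n X I \<ge> 0"
  by (simp add: density_def)

lemma density_le_1:
  assumes "structured n I \<gamma> X"
  shows "density n X I \<le> 1"
proof -
  note X = structuredD(2-4)[OF assms]
  then have "card I \<le> n" using card_mono[of "{..<n}" I] by simp
  have "real (card X) \<le> 2 powr real (n - card I)"
    using card_le_fixed_on[OF X] by (simp add: powr_realpow)
  then have "density n X I \<le> 2 powr real (n - card I) * 2 powr (real (card I) - n)"
    unfolding density_def by (rule mult_right_mono) simp
  also have "\<dots> = 1"
    using \<open>card I \<le> n\<close> by (simp add: of_nat_diff powr_add[symmetric])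
  finally show ?thesis .
qed

definition density_budget ::
  "nat \<Rightarrow> real \<Rightarrow> real \<Rightarrow> bool list set \<Rightarrow> nat set \<Rightarrow> bool list set \<Rightarrow> nat set \<Rightarrow> real \<Rightarrow> bool" where
  "density_budget n \<gamma> k X I Y J B \<longleftrightarrow>
     B \<le> density n X I * density n Y J * 2 powr ((1 - \<gamma>) * (k - real (card I + card J)))"

lemma density_budget_commute:
  "density_budget n \<gamma> k X I Y J B \<longleftrightarrow> density_budget n \<gamma> k Y J X I B"
  by (simp add: density_budget_def ac_simps)

lemma codim_le_of_density_budget:
  assumes "\<gamma> < 1" "structured n I \<gamma> X" "structured n J \<gamma> Y" "1 \<le> B"
    and "density_budget n \<gamma> k X I Y J B"
  shows "real (card I + card J) \<le> k"
proof -
  define e where "e = (1 - \<gamma>) * (k - real (card I + card J))"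
  have "density n X I * density n Y J \<le> 1"
    using assms(2,3) by (intro mult_le_one density_le_1 density_nonneg)
  then have "density n X I * density n Y J * 2 powr e \<le> 2 powr e"
    by (intro mult_left_le_one_le density_nonneg mult_nonneg_nonneg) auto
  moreover have "B \<le> density n X I * density n Y J * 2 powr e"
    using assms(5) unfolding density_budget_def e_def .
  ultimately have "1 \<le> 2 powr e"
    using assms(4) by linarith
  then have "0 \<le> e"
    using powr_le_cancel_iff[of 2 0 e] by simp
  then show ?thesis using assms(1) unfolding e_def by (simp add: zero_le_mult_iff)
qed

lemma density_budget_piece:
  assumes budget: "density_budget n \<gamma> k X I Y J B"
    and "finite I" "finite K" "K \<inter> I = {}" "card X > 0"
    and dense: "real (card P) \<ge> 2 powr (- \<gamma> * card K) * card S"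
  shows "density_budget n \<gamma> k P (I \<union> K) Y J (B * card S / card X)"
proof -
  define c where "c = real (card I + card J)"
  have card_IK: "real (card (I \<union> K)) = card I + card K"
    using assms(2-4) by (simp add: card_Un_disjoint Int_commute)
  have "density n P (I \<union> K) \<ge> 2 powr (- \<gamma> * card K) * card S * 2 powr (real (card I + card K) - n)"
    unfolding density_def card_IK using dense by (intro mult_right_mono) auto
  also have "2 powr (- \<gamma> * card K) * card S * 2 powr (real (card I + card K) - n)
      = 2 powr ((1 - \<gamma>) * card K) * (card S / card X) * density n X I"
    using assms(5) by (simp add: density_def powr_add[symmetric] field_simps)
  finally have dense_P: "2 powr ((1 - \<gamma>) * card K) * (card S / card X) * density n X I \<le> density n P (I \<union> K)" .
  have "B * card S / card X \<le> density n X I * density n Y J * 2 powr ((1 - \<gamma>) * (k - c)) * card S / card X"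
    using budget unfolding density_budget_def c_def by (intro divide_right_mono mult_right_mono) auto
  also have "\<dots> = (2 powr ((1 - \<gamma>) * card K) * (card S / card X) * density n X I)
      * density n Y J * 2 powr ((1 - \<gamma>) * (k - (c + card K)))"
    by (simp add: powr_add[symmetric] algebra_simps)
  also have "\<dots> \<le> density n P (I \<union> K) * density n Y J * 2 powr ((1 - \<gamma>) * (k - (c + card K)))"
    using dense_P by (intro mult_right_mono density_nonneg) auto
  finally show ?thesis
    unfolding density_budget_def c_def using card_IK by (simp add: algebra_simps)
qed

lemma sqrt_remainder_le:
  fixes p s :: real
  assumes "0 \<le> p" "p \<le> s"
  shows "p / sqrt s + 2 * sqrt (s - p) \<le> 2 * sqrt s"
proof (cases "s = 0")
  case False
  then have "sqrt s > 0" using assms by simp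
  have "2 * (sqrt (s - p) * sqrt s) \<le> (s - p) + s"
    using sum_squares_bound[of "sqrt (s - p)" "sqrt s"] assms by (simp add: power2_eq_square)
  then have "p + 2 * sqrt (s - p) * sqrt s \<le> 2 * s"
    by simp
  have "p / sqrt s + 2 * sqrt (s - p) = (p + 2 * sqrt (s - p) * sqrt s) / sqrt s"
    using \<open>sqrt s > 0\<close> by (simp add: field_simps)
  also have "\<dots> \<le> 2 * s / sqrt s"
    using \<open>sqrt s > 0\<close> \<open>p + 2 * sqrt (s - p) * sqrt s \<le> 2 * s\<close> by (simp add: divide_right_mono)
  also have "\<dots> = 2 * sqrt s"
    using real_div_sqrt[of s] assms by (metis order_trans times_divide_eq_right)
  finally show ?thesis .
qed (use assms in simp)

lemma sqrt_add_le:
  fixes a b :: real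
  assumes "0 \<le> a" "0 \<le> b"
  shows "2 * (sqrt a + sqrt b) \<le> 3 * sqrt (a + b)"
proof (rule power2_le_imp_le)
  have "2 * (sqrt a * sqrt b) \<le> a + b"
    using sum_squares_bound[of "sqrt a" "sqrt b"] assms by (simp add: power2_eq_square)
  have "(2 * (sqrt a + sqrt b))\<^sup>2 = 4 * (sqrt a)\<^sup>2 + 4 * (sqrt b)\<^sup>2 + 8 * (sqrt a * sqrt b)"
    by algebra
  also have "\<dots> = 4 * a + 4 * b + 8 * (sqrt a * sqrt b)"
    by (simp only: real_sqrt_pow2[OF assms(1)] real_sqrt_pow2[OF assms(2)])
  also have "\<dots> \<le> 9 * (a + b)"
    using \<open>2 * (sqrt a * sqrt b) \<le> a + b\<close> assms by (smt (verit))
  also have "\<dots> = (3 * sqrt (a + b))\<^sup>2"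
    using assms by (simp add: power_mult_distrib)
  finally show "(2 * (sqrt a + sqrt b))\<^sup>2 \<le> (3 * sqrt (a + b))\<^sup>2" .
qed (use assms in simp)

section \<open>Generalized protocols\<close>

definition covered :: "'o gproto \<Rightarrow> (bool list \<times> bool list) set" where
  "covered T = (\<Union>(X, Y, v)\<in>leaves T. X \<times> Y)"

lemma covered_GLeaf [simp]: "covered (GLeaf X Y v) = X \<times> Y"
  by (simp add: covered_def)

lemma covered_GNode [simp]: "covered (GNode X Y ts) = (\<Union>t\<in>set ts. covered t)"
  by (auto simp: covered_def)

lemma card_Diff_Un_le:
  "finite A \<Longrightarrow> finite A' \<Longrightarrow> card ((A \<union> A') - (C \<union> C')) \<le> card (A - C) + card (A' - C')"
  by (rule order_trans[OF card_mono card_Un_le]) auto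

lemma geval_eq_Some:
  assumes "\<forall>(X, Y, v)\<in>leaves T. \<forall>x\<in>X. \<forall>y\<in>Y. eval \<Pi> x y = v" and "(x, y) \<in> covered T"
  shows "geval T x y = Some (eval \<Pi> x y)"
proof -
  have ex: "\<exists>l. l \<in> leaves T \<and> x \<in> fst l \<and> y \<in> fst (snd l)"
    using assms(2) by (force simp: covered_def)
  define l where "l = (SOME l. l \<in> leaves T \<and> x \<in> fst l \<and> y \<in> fst (snd l))"
  have l: "l \<in> leaves T" "x \<in> fst l" "y \<in> fst (snd l)"
    unfolding l_def using someI_ex[OF ex] by blast+
  then have "snd (snd l) = eval \<Pi> x y"
    using assms(1) by (cases l) auto
  moreover have "\<exists>(X, Y, v)\<in>leaves T. x \<in> X \<and> y \<in> Y"
    using l by (cases l) auto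
  ultimately show ?thesis
    unfolding geval_def l_def[symmetric] by simp
qed

lemma card_disagreement_le:
  assumes "\<forall>(X', Y', v)\<in>leaves T. \<forall>x\<in>X'. \<forall>y\<in>Y'. eval \<Pi> x y = v" "finite X" "finite Y"
  shows "card {(x, y) \<in> X \<times> Y. geval T x y \<noteq> Some (eval \<Pi> x y)} \<le> card (X \<times> Y - covered T)"
  using geval_eq_Some[OF assms(1)] assms(2,3) by (intro card_mono) auto

lemma leaves_subset_rect:
  "wf_nodes T \<Longrightarrow> (X, Y, v) \<in> leaves T \<Longrightarrow> X \<subseteq> rectX T \<and> Y \<subseteq> rectY T"
proof (induction T)
  case (GNode X' Y' ts)
  then obtain t where "t \<in> set ts" "(X, Y, v) \<in> leaves t" by auto
  with GNode show ?case
    by (fastforce simp: alice_split_def bob_split_def)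
qed simp

lemma gdepth_GNode_le:
  "(\<And>t. t \<in> set ts \<Longrightarrow> gdepth t \<le> m) \<Longrightarrow> gdepth (GNode X Y ts) \<le> Suc m"
  by (simp add: Max_le_iff)

lemma sorted_wrt_disjnt_nth:
  assumes "sorted_wrt (\<lambda>s t. disjnt (f s) (f t)) ts" "i < length ts" "j < length ts" "i \<noteq> j"
  shows "f (ts ! i) \<inter> f (ts ! j) = {}"
  using assms sorted_wrt_iff_nth_less[of _ ts]
  by (cases i j rule: linorder_cases) (auto simp: disjnt_def)

fun gtranspose :: "'o gproto \<Rightarrow> 'o gproto" where
  "gtranspose (GLeaf X Y v) = GLeaf Y X v"
| "gtranspose (GNode X Y ts) = GNode Y X (map gtranspose ts)"

lemma rect_gtranspose [simp]:
  "rectX (gtranspose T) = rectY T" "rectY (gtranspose T) = rectX T"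
  by (cases T; simp)+

lemma leaves_gtranspose: "leaves (gtranspose T) = (\<lambda>(X, Y, v). (Y, X, v)) ` leaves T"
  by (induction T) (auto simp: image_UN)

lemma node_rects_gtranspose: "node_rects (gtranspose T) = prod.swap ` node_rects T"
  by (induction T) (auto simp: image_UN)

lemma gdepth_gtranspose [simp]: "gdepth (gtranspose T) = gdepth T"
proof (induction T)
  case (GNode X Y ts)
  then have "map (gdepth \<circ> gtranspose) ts = map gdepth ts" by simp
  then show ?case by (simp add: comp_def)
qed simp

lemma wf_nodes_gtranspose [simp]: "wf_nodes (gtranspose T) \<longleftrightarrow> wf_nodes T"
proof (induction T)
  case (GNode X Y ts)
  have "alice_split Y X (map gtranspose ts) \<longleftrightarrow> bob_split X Y ts"
       "bob_split Y X (map gtranspose ts) \<longleftrightarrow> alice_split X Y ts"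
    by (auto simp: alice_split_def bob_split_def)
  then show ?case using GNode by auto
qed simp

lemma subcube_like_codim_le_gtranspose [simp]:
  "subcube_like_codim_le n \<gamma> (gtranspose T) k \<longleftrightarrow> subcube_like_codim_le n \<gamma> T k"
proof -
  have "(\<exists>I J. subcube_like_wrt n \<gamma> Y X I J \<and> real (card I + card J) \<le> k) \<longleftrightarrow>
      (\<exists>I J. subcube_like_wrt n \<gamma> X Y I J \<and> real (card I + card J) \<le> k)" for X Y
    by (metis subcube_like_wrt_def add.commute)
  then show ?thesis
    unfolding subcube_like_codim_le_def node_rects_gtranspose by auto
qed

lemma covered_gtranspose: "covered (gtranspose T) = prod.swap ` covered T"
  unfolding covered_def leaves_gtranspose by force

section \<open>Simulation\<close>

fun swap_players :: "'o proto \<Rightarrow> 'o proto" where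
  "swap_players (Leaf v) = Leaf v"
| "swap_players (ANode f l r) = BNode f (swap_players l) (swap_players r)"
| "swap_players (BNode g l r) = ANode g (swap_players l) (swap_players r)"

lemma eval_swap_players [simp]: "eval (swap_players \<Pi>) y x = eval \<Pi> x y"
  by (induction \<Pi>) auto

lemma depth_swap_players [simp]: "depth (swap_players \<Pi>) = depth \<Pi>"
  by (induction \<Pi>) auto

lemma swap_players_involutive [simp]: "swap_players (swap_players \<Pi>) = \<Pi>"
  by (induction \<Pi>) auto

definition partial_sim :: "nat \<Rightarrow> real \<Rightarrow> real \<Rightarrow> 'o proto \<Rightarrow> 'o gproto \<Rightarrow> bool" where
  "partial_sim n \<gamma> k \<Pi> T \<longleftrightarrow>
     wf_nodes T \<and> gdepth T \<le> depth \<Pi> \<and> subcube_like_codim_le n \<gamma> T k \<and>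
     (\<forall>(X, Y, v)\<in>leaves T. \<forall>x\<in>X. \<forall>y\<in>Y. eval \<Pi> x y = v)"

lemma partial_sim_gtranspose:
  "partial_sim n \<gamma> k \<Pi> T \<Longrightarrow> partial_sim n \<gamma> k (swap_players \<Pi>) (gtranspose T)"
  unfolding partial_sim_def leaves_gtranspose by auto

lemma partial_sim_ANode:
  assumes ts0: "\<forall>t\<in>set ts0. rectX t \<subseteq> {x\<in>X. f x} \<and> rectY t = Y \<and> partial_sim n \<gamma> k l t"
    and ts1: "\<forall>t\<in>set ts1. rectX t \<subseteq> {x\<in>X. \<not> f x} \<and> rectY t = Y \<and> partial_sim n \<gamma> k r t"
    and disjoint: "sorted_wrt (\<lambda>s t. disjnt (rectX s) (rectX t)) ts0"
      "sorted_wrt (\<lambda>s t. disjnt (rectX s) (rectX t)) ts1"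
    and root: "subcube_like_wrt n \<gamma> X Y I J" "real (card I + card J) \<le> k"
  shows "partial_sim n \<gamma> k (ANode f l r) (GNode X Y (ts0 @ ts1))"
proof -
  let ?ts = "ts0 @ ts1"
  have "sorted_wrt (\<lambda>s t. disjnt (rectX s) (rectX t)) ?ts"
    using ts0 ts1 disjoint by (fastforce simp: sorted_wrt_append disjnt_def)
  then have "alice_split X Y ?ts"
    using ts0 ts1 sorted_wrt_disjnt_nth[of rectX ?ts] unfolding alice_split_def by auto
  then have "wf_nodes (GNode X Y ?ts)"
    using ts0 ts1 by (auto simp: partial_sim_def)
  moreover have "gdepth (GNode X Y ?ts) \<le> depth (ANode f l r)"
    using ts0 ts1 by (simp only: depth.simps) (rule gdepth_GNode_le, fastforce simp: partial_sim_def)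
  moreover have "subcube_like_codim_le n \<gamma> (GNode X Y ?ts) k"
    using ts0 ts1 root unfolding subcube_like_codim_le_def partial_sim_def by fastforce
  moreover have "eval (ANode f l r) x y = v"
    if leaf: "(X', Y', v) \<in> leaves (GNode X Y ?ts)" and xy: "x \<in> X'" "y \<in> Y'" for X' Y' v x y
  proof -
    obtain t where t: "t \<in> set ?ts" "(X', Y', v) \<in> leaves t" using leaf by auto
    then have "X' \<subseteq> rectX t"
      using ts0 ts1 leaves_subset_rect by (fastforce simp: partial_sim_def)
    then show ?thesis
      using t ts0 ts1 xy by (fastforce simp: partial_sim_def)
  qed
  ultimately show ?thesis unfolding partial_sim_def by blast
qed

definition simulable :: "nat \<Rightarrow> real \<Rightarrow> real \<Rightarrow> 'o proto \<Rightarrow> bool" where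
  "simulable n \<gamma> k \<Pi> \<longleftrightarrow>
     (\<forall>X I Y J B. structured n I \<gamma> X \<longrightarrow> structured n J \<gamma> Y \<longrightarrow> 1 \<le> B \<longrightarrow>
        density_budget n \<gamma> k X I Y J B \<longrightarrow>
        (\<exists>T. rectX T = X \<and> rectY T = Y \<and> partial_sim n \<gamma> k \<Pi> T \<and>
             real (card (X \<times> Y - covered T)) \<le> real (card X) * real (card Y) * 3 ^ depth \<Pi> / sqrt B))"

lemma simulable_Leaf:
  assumes "\<gamma> < 1"
  shows "simulable n \<gamma> k (Leaf v)"
  unfolding simulable_def
proof (intro allI impI)
  fix X I Y J B
  assume X: "structured n I \<gamma> X" and Y: "structured n J \<gamma> Y"
    and B: "1 \<le> B" and "density_budget n \<gamma> k X I Y J B"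
  then have "real (card I + card J) \<le> k"
    by (intro codim_le_of_density_budget[OF assms])
  then have "partial_sim n \<gamma> k (Leaf v) (GLeaf X Y v)"
    using X Y by (auto simp: partial_sim_def subcube_like_codim_le_def subcube_like_wrt_def)
  then show "\<exists>T. rectX T = X \<and> rectY T = Y \<and> partial_sim n \<gamma> k (Leaf v) T \<and>
      real (card (X \<times> Y - covered T)) \<le> real (card X) * real (card Y) * 3 ^ depth (Leaf v) / sqrt B"
    using B by (intro exI[of _ "GLeaf X Y v"]) simp
qed

lemma simulable_swap_players:
  assumes "simulable n \<gamma> k \<Pi>"
  shows "simulable n \<gamma> k (swap_players \<Pi>)"
  unfolding simulable_def
proof (intro allI impI)
  fix X I Y J B
  assume "structured n I \<gamma> X" "structured n J \<gamma> Y" "1 \<le> B" "density_budget n \<gamma> k X I Y J B"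
  then obtain T where T: "rectX T = Y" "rectY T = X" "partial_sim n \<gamma> k \<Pi> T"
      "real (card (Y \<times> X - covered T)) \<le> real (card Y) * real (card X) * 3 ^ depth \<Pi> / sqrt B"
    using assms density_budget_commute unfolding simulable_def by blast
  have "X \<times> Y - covered (gtranspose T) = prod.swap ` (Y \<times> X - covered T)"
    by (auto simp: covered_gtranspose)
  then have error: "real (card (X \<times> Y - covered (gtranspose T)))
      \<le> real (card X) * real (card Y) * 3 ^ depth (swap_players \<Pi>) / sqrt B"
    using T(4) by (simp add: card_image, simp only: mult.commute)
  have rect: "rectX (gtranspose T) = X" "rectY (gtranspose T) = Y"
    using T(1,2) by simp_all
  have sim: "partial_sim n \<gamma> k (swap_players \<Pi>) (gtranspose T)"
    using T(3) by (rule partial_sim_gtranspose)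
  show "\<exists>T. rectX T = X \<and> rectY T = Y \<and> partial_sim n \<gamma> k (swap_players \<Pi>) T \<and>
      real (card (X \<times> Y - covered T)) \<le> real (card X) * real (card Y) * 3 ^ depth (swap_players \<Pi>) / sqrt B"
    by (intro exI[of _ "gtranspose T"] conjI rect sim error)
qed

lemma children_of_partition:
  fixes \<Pi> :: "'o proto"
  assumes sim: "simulable n \<gamma> k \<Pi>"
    and X: "finite X" "finite I" and B: "1 \<le> B"
    and Y: "structured n J \<gamma> Y" and budget: "density_budget n \<gamma> k X I Y J B"
  shows "density_restoring_partition n \<gamma> I S L \<Longrightarrow> S \<subseteq> X \<Longrightarrow>
    \<exists>ts. (\<forall>t\<in>set ts. rectX t \<subseteq> S \<and> rectY t = Y \<and> partial_sim n \<gamma> k \<Pi> t) \<and>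
      sorted_wrt (\<lambda>s t. disjnt (rectX s) (rectX t)) ts \<and>
      real (card (S \<times> Y - (\<Union>t\<in>set ts. covered t)))
        \<le> 2 * 3 ^ depth \<Pi> * real (card Y) * sqrt (card X / B) * sqrt (card S)"
proof (induction L arbitrary: S)
  case Nil
  then show ?case by (intro exI[of _ "[]"]) simp
next
  case (Cons PK L)
  obtain P K where PK: "PK = (P, K)" by fastforce
  have P: "P \<subseteq> S" "K \<inter> I = {}" "structured n (I \<union> K) \<gamma> P"
    and dense: "real (card P) \<ge> 2 powr (- \<gamma> * card K) * card S"
    and rest: "density_restoring_partition n \<gamma> I (S - P) L"
    using Cons.prems(1) unfolding PK by auto
  obtain ts' where ts': "\<forall>t\<in>set ts'. rectX t \<subseteq> S - P \<and> rectY t = Y \<and> partial_sim n \<gamma> k \<Pi> t"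
      "sorted_wrt (\<lambda>s t. disjnt (rectX s) (rectX t)) ts'"
      "real (card ((S - P) \<times> Y - (\<Union>t\<in>set ts'. covered t)))
        \<le> 2 * 3 ^ depth \<Pi> * real (card Y) * sqrt (card X / B) * sqrt (card (S - P))"
    using Cons.IH[OF rest] Cons.prems(2) by blast
  define c :: real where "c = 3 ^ depth \<Pi>"
  define B' where "B' = B * card S / card X"
  have "finite S" "finite P" "finite Y" "finite K"
    using finite_subset[OF Cons.prems(2) X(1)] structuredD(5)[OF Y] structuredD(6)[OF P(3)]
      finite_subset[OF P(1)] by auto
  have "card P > 0" "card P \<le> card S" "card S \<le> card X"
    using P(1) Cons.prems(2) \<open>finite S\<close> \<open>finite P\<close> X(1) structuredD(1)[OF P(3)]
    by (auto intro: card_mono simp: card_gt_0_iff)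
  then have "B' > 0" using B unfolding B'_def by simp
  obtain ts0 where ts0: "\<forall>t\<in>set ts0. rectX t \<subseteq> P \<and> rectY t = Y \<and> partial_sim n \<gamma> k \<Pi> t"
      "sorted_wrt (\<lambda>s t. disjnt (rectX s) (rectX t)) ts0"
      "real (card (P \<times> Y - (\<Union>t\<in>set ts0. covered t))) \<le> real (card P) * real (card Y) * c / sqrt B'"
    \<comment> \<open>a piece whose budget falls below 1 is left uncovered\<close>
  proof (cases "1 \<le> B'")
    case True
    have "density_budget n \<gamma> k P (I \<union> K) Y J B'"
      unfolding B'_def using budget X(2) \<open>finite K\<close> P(2) _ dense
      by (rule density_budget_piece) (use \<open>card P > 0\<close> \<open>card P \<le> card S\<close> \<open>card S \<le> card X\<close> in linarith)
    then obtain T where "rectX T = P" "rectY T = Y" "partial_sim n \<gamma> k \<Pi> T"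
        "real (card (P \<times> Y - covered T)) \<le> real (card P) * real (card Y) * c / sqrt B'"
      using sim P(3) Y True unfolding simulable_def c_def by blast
    then show ?thesis by (intro that[of "[T]"]) simp_all
  next
    case False
    have "c \<ge> 1" unfolding c_def by simp
    moreover have "sqrt B' \<le> 1" using False by simp
    ultimately have "sqrt B' \<le> c" by linarith
    then have "1 \<le> c / sqrt B'" using \<open>B' > 0\<close> by (simp add: le_divide_eq)
    then have "real (card P) * card Y * 1 \<le> real (card P) * card Y * (c / sqrt B')"
      by (intro mult_left_mono) auto
    then show ?thesis by (intro that[of "[]"]) (simp_all add: card_cartesian_product)
  qed
  let ?ts = "ts0 @ ts'"
  have "S \<times> Y - (\<Union>t\<in>set ?ts. covered t)
      = (P \<times> Y \<union> (S - P) \<times> Y) - ((\<Union>t\<in>set ts0. covered t) \<union> (\<Union>t\<in>set ts'. covered t))"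
    using P(1) by auto
  then have "card (S \<times> Y - (\<Union>t\<in>set ?ts. covered t))
      \<le> card (P \<times> Y - (\<Union>t\<in>set ts0. covered t)) + card ((S - P) \<times> Y - (\<Union>t\<in>set ts'. covered t))"
    using \<open>finite S\<close> \<open>finite P\<close> \<open>finite Y\<close> by (simp only: card_Diff_Un_le finite_SigmaI finite_Diff)
  then have "real (card (S \<times> Y - (\<Union>t\<in>set ?ts. covered t)))
      \<le> card (P \<times> Y - (\<Union>t\<in>set ts0. covered t)) + card ((S - P) \<times> Y - (\<Union>t\<in>set ts'. covered t))"
    by linarith
  also have "\<dots> \<le> real (card P) * real (card Y) * c / sqrt B' + 2 * c * card Y * sqrt (card X / B) * sqrt (card (S - P))"
    using ts0(3) ts'(3) unfolding c_def by simp
  also have "\<dots> = c * card Y * sqrt (card X / B) * (card P / sqrt (card S) + 2 * sqrt (card S - card P))"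
  proof -
    have "real (card P) * real (card Y) * c / sqrt B' = c * card Y * sqrt (card X / B) * (card P / sqrt (card S))"
      using \<open>card P > 0\<close> \<open>card P \<le> card S\<close> \<open>card S \<le> card X\<close> B
      by (simp add: B'_def real_sqrt_divide real_sqrt_mult field_simps)
    moreover have "real (card (S - P)) = real (card S) - card P"
      using \<open>finite P\<close> P(1) \<open>card P \<le> card S\<close> by (simp add: card_Diff_subset of_nat_diff)
    ultimately show ?thesis by (simp add: algebra_simps)
  qed
  also have "\<dots> \<le> c * card Y * sqrt (card X / B) * (2 * sqrt (card S))"
    using sqrt_remainder_le[of "card P" "card S"] \<open>card P \<le> card S\<close> B
    by (intro mult_left_mono) (auto simp: c_def)
  finally have "real (card (S \<times> Y - (\<Union>t\<in>set ?ts. covered t)))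
      \<le> 2 * 3 ^ depth \<Pi> * real (card Y) * sqrt (card X / B) * sqrt (card S)"
    by (simp add: c_def)
  moreover have "sorted_wrt (\<lambda>s t. disjnt (rectX s) (rectX t)) ?ts"
    using ts0 ts' by (fastforce simp: sorted_wrt_append disjnt_def)
  ultimately show ?case
    using ts0(1) ts'(1) P(1) by (intro exI[of _ ?ts]) (simp, blast)
qed

lemma simulable_ANode:
  assumes "\<gamma> < 1" "simulable n \<gamma> k l" "simulable n \<gamma> k r"
  shows "simulable n \<gamma> k (ANode f l r)"
  unfolding simulable_def
proof (intro allI impI)
  fix X I Y J B
  assume X: "structured n I \<gamma> X" and Y: "structured n J \<gamma> Y" and B: "1 \<le> B"
    and budget: "density_budget n \<gamma> k X I Y J B"
  define X0 X1 where "X0 = {x\<in>X. f x}" and "X1 = {x\<in>X. \<not> f x}"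
  have "X0 \<subseteq> X" "X1 \<subseteq> X" unfolding X0_def X1_def by auto
  note X_facts = structuredD[OF X]
  obtain L0 L1 where "density_restoring_partition n \<gamma> I X0 L0" "density_restoring_partition n \<gamma> I X1 L1"
    using density_restoring_partition_exists fixed_on_subset[OF X_facts(4)] X_facts(2,3)
      \<open>X0 \<subseteq> X\<close> \<open>X1 \<subseteq> X\<close> by (meson subset_trans)
  then obtain ts0 ts1 where
    ts0: "\<forall>t\<in>set ts0. rectX t \<subseteq> X0 \<and> rectY t = Y \<and> partial_sim n \<gamma> k l t"
      "sorted_wrt (\<lambda>s t. disjnt (rectX s) (rectX t)) ts0"
      "real (card (X0 \<times> Y - (\<Union>t\<in>set ts0. covered t)))
        \<le> 2 * 3 ^ depth l * real (card Y) * sqrt (card X / B) * sqrt (card X0)" and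
    ts1: "\<forall>t\<in>set ts1. rectX t \<subseteq> X1 \<and> rectY t = Y \<and> partial_sim n \<gamma> k r t"
      "sorted_wrt (\<lambda>s t. disjnt (rectX s) (rectX t)) ts1"
      "real (card (X1 \<times> Y - (\<Union>t\<in>set ts1. covered t)))
        \<le> 2 * 3 ^ depth r * real (card Y) * sqrt (card X / B) * sqrt (card X1)"
    using children_of_partition[OF assms(2) X_facts(5,6) B Y budget _ \<open>X0 \<subseteq> X\<close>]
      children_of_partition[OF assms(3) X_facts(5,6) B Y budget _ \<open>X1 \<subseteq> X\<close>]
    by blast
  let ?T = "GNode X Y (ts0 @ ts1)"
  have "real (card I + card J) \<le> k"
    using assms(1) X Y B budget by (rule codim_le_of_density_budget)
  then have sim: "partial_sim n \<gamma> k (ANode f l r) ?T"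
    using ts0(1,2) ts1(1,2) X Y unfolding X0_def X1_def
    by (intro partial_sim_ANode) (auto simp: subcube_like_wrt_def)
  define c :: real where "c = 3 ^ max (depth l) (depth r)"
  have "finite X0" "finite X1" "finite Y"
    using \<open>X0 \<subseteq> X\<close> \<open>X1 \<subseteq> X\<close> X_facts(5) structuredD(5)[OF Y] by (auto intro: finite_subset[of _ X])
  have "X \<times> Y - covered ?T
      = (X0 \<times> Y \<union> X1 \<times> Y) - ((\<Union>t\<in>set ts0. covered t) \<union> (\<Union>t\<in>set ts1. covered t))"
    unfolding X0_def X1_def by auto
  then have "card (X \<times> Y - covered ?T)
      \<le> card (X0 \<times> Y - (\<Union>t\<in>set ts0. covered t)) + card (X1 \<times> Y - (\<Union>t\<in>set ts1. covered t))"
    using \<open>finite X0\<close> \<open>finite X1\<close> \<open>finite Y\<close> by (simp only: card_Diff_Un_le finite_SigmaI)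
  then have "real (card (X \<times> Y - covered ?T))
      \<le> card (X0 \<times> Y - (\<Union>t\<in>set ts0. covered t)) + card (X1 \<times> Y - (\<Union>t\<in>set ts1. covered t))"
    by linarith
  also have "\<dots> \<le> 2 * c * card Y * sqrt (card X / B) * sqrt (card X0)
      + 2 * c * card Y * sqrt (card X / B) * sqrt (card X1)"
  proof -
    have "(3::real) ^ depth l \<le> c" "(3::real) ^ depth r \<le> c"
      unfolding c_def by (simp_all add: power_increasing)
    then have "2 * 3 ^ depth l * real (card Y) * sqrt (card X / B) * sqrt (card X0)
          \<le> 2 * c * card Y * sqrt (card X / B) * sqrt (card X0)"
        "2 * 3 ^ depth r * real (card Y) * sqrt (card X / B) * sqrt (card X1)
          \<le> 2 * c * card Y * sqrt (card X / B) * sqrt (card X1)"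
      using B by (intro mult_right_mono; simp)+
    then show ?thesis using ts0(3) ts1(3) by linarith
  qed
  also have "\<dots> = c * card Y * sqrt (card X / B) * (2 * (sqrt (card X0) + sqrt (card X1)))"
    by (simp add: algebra_simps)
  also have "\<dots> \<le> c * card Y * sqrt (card X / B) * (3 * sqrt (real (card X0) + real (card X1)))"
    using B by (intro mult_left_mono sqrt_add_le) (auto simp: c_def)
  also have "real (card X0) + real (card X1) = card X"
  proof -
    have "X = X0 \<union> X1" "X0 \<inter> X1 = {}" unfolding X0_def X1_def by auto
    then show ?thesis using card_Un_disjoint[OF \<open>finite X0\<close> \<open>finite X1\<close>] by simp
  qed
  also have "c * card Y * sqrt (card X / B) * (3 * sqrt (card X))
      = real (card X) * real (card Y) * (3 * c) / sqrt B"
  proof -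
    have "sqrt (card X / B) * sqrt (card X) = card X / sqrt B"
      by (simp add: real_sqrt_divide)
    then show ?thesis by (simp add: algebra_simps)
  qed
  also have "3 * c = 3 ^ depth (ANode f l r)"
    by (simp add: c_def)
  finally show "\<exists>T. rectX T = X \<and> rectY T = Y \<and> partial_sim n \<gamma> k (ANode f l r) T \<and>
      real (card (X \<times> Y - covered T)) \<le> real (card X) * real (card Y) * 3 ^ depth (ANode f l r) / sqrt B"
    using sim by (intro exI[of _ ?T]) simp
qed

theorem simulable_all:
  assumes "\<gamma> < 1"
  shows "simulable n \<gamma> k \<Pi>"
proof (induction \<Pi>)
  case (Leaf v)
  show ?case using assms by (rule simulable_Leaf)
next
  case (ANode f l r)
  then show ?case using assms by (intro simulable_ANode)
next
  case (BNode g l r)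
  then have "simulable n \<gamma> k (ANode g (swap_players l) (swap_players r))"
    using assms by (intro simulable_ANode simulable_swap_players)
  then have "simulable n \<gamma> k (swap_players (ANode g (swap_players l) (swap_players r)))"
    by (rule simulable_swap_players)
  then show ?case by simp
qed

lemma density_cube: "density n (cube n) {} = 1"
  by (simp add: density_def card_cube powr_realpow[symmetric] powr_add[symmetric])

lemma three_pow_div_sqrt_le_exp: "(3::real) ^ d / sqrt (128 ^ d) \<le> exp (- real d)"
proof -
  have "(9::real) ^ d \<le> sqrt 128 ^ d"
    by (intro power_mono real_le_rsqrt) simp_all
  then have "(3::real) ^ d / sqrt (128 ^ d) \<le> 3 ^ d / 9 ^ d"
    by (intro divide_left_mono) (simp_all add: real_sqrt_power)
  also have "\<dots> = (1 / 3) ^ d"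
    by (simp add: power_divide[symmetric])
  also have "\<dots> \<le> exp (- 1) ^ d"
    using exp_le by (intro power_mono) (simp_all add: exp_minus field_simps)
  also have "\<dots> = exp (- real d)"
    by (simp add: exp_of_nat_mult[symmetric])
  finally show ?thesis .
qed

theorem mainTheorem4:
  fixes \<gamma> :: real and n d :: nat and \<Pi> :: "'o proto"
  assumes "0 < \<gamma>" and "\<gamma> < 1" and "depth \<Pi> = d"
  shows "\<exists>T :: 'o gproto.
           wf_gproto n T \<and> gdepth T \<le> d \<and>
           subcube_like_codim_le n \<gamma> T (7 / (1 - \<gamma>) * real d) \<and>
           real (card {(x, y) \<in> cube n \<times> cube n. geval T x y \<noteq> Some (eval \<Pi> x y)})
             / 2 ^ (2 * n) \<le> exp (- real d)"
proof -
  define k where "k = 7 / (1 - \<gamma>) * real d"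
  have "2 powr ((1 - \<gamma>) * k) = 2 powr real (7 * d)"
    using assms(2) by (simp add: k_def)
  also have "\<dots> = 128 ^ d"
    by (subst powr_realpow) (simp_all add: power_mult)
  finally have "density_budget n \<gamma> k (cube n) {} (cube n) {} (128 ^ d)"
    by (simp add: density_budget_def density_cube)
  moreover have "structured n {} \<gamma> (cube n)"
    using assms(2) by (intro structured_cube) simp
  ultimately obtain T where T: "rectX T = cube n" "rectY T = cube n" "partial_sim n \<gamma> k \<Pi> T"
      "real (card (cube n \<times> cube n - covered T))
        \<le> real (card (cube n)) * real (card (cube n)) * 3 ^ depth \<Pi> / sqrt (128 ^ d)"
    using simulable_all[OF assms(2), of n k \<Pi>, unfolded simulable_def, rule_format, of "{}" "cube n" "{}" "cube n" "128 ^ d"]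
    by auto
  let ?E = "{(x, y) \<in> cube n \<times> cube n. geval T x y \<noteq> Some (eval \<Pi> x y)}"
  have "real (card ?E) \<le> 2 ^ (2 * n) * (3 ^ d / sqrt (128 ^ d))"
    using card_disagreement_le[of T \<Pi> "cube n" "cube n"] T(3,4) assms(3) finite_cube
    unfolding partial_sim_def card_cube by (simp add: power_add[symmetric] mult_2)
  also have "\<dots> \<le> 2 ^ (2 * n) * exp (- real d)"
    by (intro mult_left_mono three_pow_div_sqrt_le_exp) simp
  finally have "real (card ?E) / 2 ^ (2 * n) \<le> exp (- real d)"
    by (simp add: pos_divide_le_eq mult.commute[of _ "exp (- real d)"])
  then show ?thesis
    using T(1-3) unfolding partial_sim_def wf_gproto_def k_def assms(3)[symmetric]
    by (intro exI[of _ T]) simp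
qed

end
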